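(* Let $\mathcal{B}_q=\{f\in\operatorname{End}_KV^{\otimes r}:\pi_r(T'_i)f=f\pi_r(T'_i)\ \text{for } i=1,\dots,r-1\}$, $\mathcal{B}_q^\dagger=\{f\in\operatorname{End}_KV^{\otimes r}:\pi_r(T'_i)f=-f\pi_r(T'_i)\ \text{for } i=1,\dots,r-1\}$ and $\mathcal{D}_q=\{f\in\operatorname{End}_KV^{\otimes r}:\pi_r(T'_1T'_{i+1})f=f\pi_r(T'_1T'_{i+1})\ \text{for } i=1,\dots,r-2\}$. Then $\mathcal{D}_q=\mathcal{B}_q\oplus\mathcal{B}_q^\dagger$.
   Context: $q$ is an indeterminate, $K=\mathbb{Q}(q)$, $r\ge2$, $m,n\ge0$ with $m+n\ge1$. $V$ is a $\mathbb{Z}_2$-graded $K$-vector space with basis $v_1,\dots,v_{m+n}$, where $|v_k|=0$ for $k\le m$ and $|v_k|=1$ for $k>m$. $T'$ is the operator on $V\otimes V$ given by $T'(v_k\otimes v_k)=(-1)^{|v_k|}v_k\otimes v_k$; for $k<l$, $T'(v_k\otimes v_l)=\frac{2(-1)^{|v_k||v_l|}}{q+q^{-1}}v_l\otimes v_k+\frac{q-q^{-1}}{q+q^{-1}}v_k\otimes v_l$; for $k>l$, $T'(v_k\otimes v_l)=\frac{2(-1)^{|v_k||v_l|}}{q+q^{-1}}v_l\otimes v_k-\frac{q-q^{-1}}{q+q^{-1}}v_k\otimes v_l$. The $q$-permutation representation $\pi_r$ of the Iwahori–Hecke algebra $\mathcal{H}_{K,r}(q)$ (generators $T_i$, $T_i^2=(q-q^{-1})T_i+1$,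 braid relations) on $V^{\otimes r}$ is the representation with $\pi_r(T'_i)=\mathrm{Id}^{\otimes i-1}\otimes T'\otimes\mathrm{Id}^{\otimes r-i-1}$, where $T'_i=\frac{2T_i-(q-q^{-1})}{q+q^{-1}}$. *)

theory Defs
  imports "HOL-Computational_Algebra.Polynomial" "HOL-Computational_Algebra.Fraction_Field"
begin

text \<open>The field K = Q(q): fractions of rational polynomials; q is the indeterminate.\<close>
type_synonym K = "rat poly fract"

definition qK :: K where "qK = Fract [:0, 1:] 1"

text \<open>Basis vectors v_1..v_(m+n) are indexed 0..m+n-1 here; index k is even iff k < m.
  sgnK m k = (-1)^|v_k|, sgn2 m k l = (-1)^(|v_k| |v_l|).\<close>
definition par :: "nat \<Rightarrow> nat \<Rightarrow> nat" where "par m k = (if k < m then 0 else 1)"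

definition sgn2 :: "nat \<Rightarrow> nat \<Rightarrow> nat \<Rightarrow> K" where
  "sgn2 m k l = (-1) ^ (par m k * par m l)"

text \<open>Tcoef m a b k l = coefficient of v_a \<otimes> v_b in T'(v_k \<otimes> v_l).\<close>
definition Tcoef :: "nat \<Rightarrow> nat \<Rightarrow> nat \<Rightarrow> nat \<Rightarrow> nat \<Rightarrow> K" where
  "Tcoef m a b k l =
    (if k = l then (if a = k \<and> b = l then (-1) ^ par m k else 0)
     else if k < l then
       (if a = l \<and> b = k then 2 * sgn2 m k l / (qK + inverse qK)
        else if a = k \<and> b = l then (qK - inverse qK) / (qK + inverse qK) else 0)
     else
       (if a = l \<and> b = k then 2 * sgn2 m k l / (qK + inverse qK)
        else if a = k \<and> b = l then - (qK - inverse qK) / (qK + inverse qK) else 0))"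

text \<open>Basis of V^{\<otimes>r}: words of length r over {0..<N}, N = m+n.
  K-endomorphisms of V^{\<otimes>r} are represented by their matrices w.r.t. this basis:
  functions f u w (row u = output, column w = input) vanishing outside words.\<close>
definition words :: "nat \<Rightarrow> nat \<Rightarrow> nat list set" where
  "words N r = {w. length w = r \<and> set w \<subseteq> {..<N}}"

definition is_end :: "nat \<Rightarrow> nat \<Rightarrow> (nat list \<Rightarrow> nat list \<Rightarrow> K) \<Rightarrow> bool" where
  "is_end N r f \<longleftrightarrow> (\<forall>u w. u \<notin> words N r \<or> w \<notin> words N r \<longrightarrow> f u w = 0)"

definition mmul :: "nat \<Rightarrow> nat \<Rightarrow> (nat list \<Rightarrow> nat list \<Rightarrow> K) \<Rightarrow> (nat list \<Rightarrow> nat list \<Rightarrow> K)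
    \<Rightarrow> (nat list \<Rightarrow> nat list \<Rightarrow> K)" where
  "mmul N r f g = (\<lambda>u w. \<Sum>v\<in>words N r. f u v * g v w)"

text \<open>Matrix of pi_r(T'_i) = Id^{\<otimes>(i-1)} \<otimes> T' \<otimes> Id^{\<otimes>(r-i-1)}, 1 \<le> i \<le> r-1,
  acting on tensor positions i and i+1 (0-based positions i-1 and i).\<close>
definition piT :: "nat \<Rightarrow> nat \<Rightarrow> nat \<Rightarrow> nat \<Rightarrow> (nat list \<Rightarrow> nat list \<Rightarrow> K)" where
  "piT m n r i = (\<lambda>u w.
     if u \<in> words (m + n) r \<and> w \<in> words (m + n) r \<and>
        (\<forall>j<r. j \<noteq> i - 1 \<and> j \<noteq> i \<longrightarrow> u ! j = w ! j)
     then Tcoef m (u ! (i - 1)) (u ! i) (w ! (i - 1)) (w ! i) else 0)"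

definition Bq :: "nat \<Rightarrow> nat \<Rightarrow> nat \<Rightarrow> (nat list \<Rightarrow> nat list \<Rightarrow> K) set" where
  "Bq m n r = {f. is_end (m + n) r f \<and>
     (\<forall>i\<in>{1..r - 1}. mmul (m + n) r (piT m n r i) f = mmul (m + n) r f (piT m n r i))}"

definition Bq_dag :: "nat \<Rightarrow> nat \<Rightarrow> nat \<Rightarrow> (nat list \<Rightarrow> nat list \<Rightarrow> K) set" where
  "Bq_dag m n r = {f. is_end (m + n) r f \<and>
     (\<forall>i\<in>{1..r - 1}. mmul (m + n) r (piT m n r i) f =
        (\<lambda>u w. - mmul (m + n) r f (piT m n r i) u w))}"

definition Dq :: "nat \<Rightarrow> nat \<Rightarrow> nat \<Rightarrow> (nat list \<Rightarrow> nat list \<Rightarrow> K) set" where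
  "Dq m n r = {f. is_end (m + n) r f \<and>
     (\<forall>i\<in>{1..r - 2}.
        let P = mmul (m + n) r (piT m n r 1) (piT m n r (i + 1))
        in mmul (m + n) r P f = mmul (m + n) r f P)}"

end

theory Submission
  imports Defs
begin

text \<open>Every pi_r(T'_i) is an involution: on the span of v_k \<otimes> v_l and v_l \<otimes> v_k the
  operator T' has trace 0 and determinant -1, the latter because (q - q^-1)^2 + 4 = (q + q^-1)^2.
  Given f in D_q put g = T'_1 f T'_1. As T'_1 T'_i commutes with f and T'_1 is an involution,
  T'_i f = g T'_i and T'_i g = f T'_i for all i, so (f + g)/2 lies in B_q and (f - g)/2 in
  B_q^dagger. Conversely, a product of two operators that both commute, or both anticommute,
  with f commutes with f. Finally, if f both commutes and anticommutes with the invertible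
  T'_1, then f T'_1 = 0 and hence f = 0.\<close>

lemma minus_inverse_div_plus_inverse_identity:
  fixes x :: "'a :: field"
  assumes "x \<noteq> 0" and "x + inverse x \<noteq> 0"
  shows "((x - inverse x) / (x + inverse x))^2 + 4 / (x + inverse x)^2 = 1"
proof -
  have "(x - inverse x)^2 + 4 = (x + inverse x)^2"
    using assms(1) by (simp add: power2_eq_square algebra_simps)
  then show ?thesis
    using assms(2) by (simp add: power_divide add_divide_distrib[symmetric])
qed

lemma qK_nonzero: "qK \<noteq> 0"
  unfolding qK_def by (simp add: Zero_fract_def eq_fract)

lemma qK_plus_inverse_nonzero: "qK + inverse qK \<noteq> 0"
proof
  assume "qK + inverse qK = 0"
  then have "qK * qK + 1 = 0"
    using qK_nonzero by (simp add: field_simps)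
  moreover have "qK * qK + 1 = Fract ([:0, 1:] * [:0, 1:] + 1) 1"
    unfolding qK_def by (simp add: One_fract_def)
  moreover have "coeff ([:0, 1:] * [:0, 1:] + 1) 2 = (1::rat)"
    by (simp add: coeff_add coeff_1 numeral_2_eq_2)
  ultimately show False
    by (auto simp add: Zero_fract_def eq_fract)
qed

lemma Tcoef_eq_0:
  assumes "\<not> (a = k \<and> b = l)" and "\<not> (a = l \<and> b = k)"
  shows "Tcoef m a b k l = 0"
  \<comment> \<open>\<open>simp\<close> without \<open>only\<close> diverges on the quotients in the discarded branches.\<close>
  unfolding Tcoef_def by (simp only: assms if_False if_cancel)

lemma Tcoef_diag_square: "Tcoef m k k k k * Tcoef m k k k k = 1"
  unfolding Tcoef_def by (simp flip: power_mult_distrib)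

lemma Tcoef_offdiag_square:
  assumes "k \<noteq> l"
  shows "Tcoef m k l k l * Tcoef m k l k l + Tcoef m k l l k * Tcoef m l k k l = 1"
proof -
  let ?D = "qK + inverse qK"
  have "sgn2 m l k * sgn2 m k l = 1"
    unfolding sgn2_def by (simp add: mult.commute flip: power_add mult_2)
  then have "Tcoef m k l l k * Tcoef m l k k l = 4 / ?D^2"
    using assms unfolding Tcoef_def by (simp add: power2_eq_square)
  moreover have "Tcoef m k l k l * Tcoef m k l k l = ((qK - inverse qK) / ?D)^2"
    using assms unfolding Tcoef_def by (simp add: power2_eq_square algebra_simps)
  ultimately show ?thesis
    using minus_inverse_div_plus_inverse_identity[OF qK_nonzero qK_plus_inverse_nonzero] by simp
qed

lemma Tcoef_offdiag_cancel:
  assumes "k \<noteq> l"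
  shows "Tcoef m l k k l * Tcoef m k l k l + Tcoef m l k l k * Tcoef m l k k l = 0"
proof -
  have "Tcoef m l k l k = - Tcoef m k l k l"
    using assms unfolding Tcoef_def by (simp add: minus_divide_left)
  then show ?thesis by (simp add: algebra_simps)
qed

lemma finite_words: "finite (words N r)"
proof -
  have "words N r = {xs. set xs \<subseteq> {..<N} \<and> length xs = r}"
    unfolding words_def by auto
  then show ?thesis
    using finite_lists_length_eq[of "{..<N}" r] by simp
qed

definition id_mat :: "nat \<Rightarrow> nat \<Rightarrow> nat list \<Rightarrow> nat list \<Rightarrow> K" where
  "id_mat N r = (\<lambda>u w. if u \<in> words N r \<and> u = w then 1 else 0)"

lemma is_end_piT: "is_end (m + n) r (piT m n r i)"
  unfolding is_end_def piT_def by auto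

lemma is_end_mmul: "is_end N r f \<Longrightarrow> is_end N r g \<Longrightarrow> is_end N r (mmul N r f g)"
  unfolding is_end_def mmul_def by auto

lemma mmul_assoc: "mmul N r (mmul N r f g) h = mmul N r f (mmul N r g h)"
proof (intro ext)
  fix u w
  have "mmul N r (mmul N r f g) h u w = (\<Sum>v\<in>words N r. \<Sum>x\<in>words N r. f u x * g x v * h v w)"
    unfolding mmul_def by (simp add: sum_distrib_right)
  also have "\<dots> = (\<Sum>x\<in>words N r. \<Sum>v\<in>words N r. f u x * g x v * h v w)"
    by (rule sum.swap)
  also have "\<dots> = mmul N r f (mmul N r g h) u w"
    unfolding mmul_def by (simp add: sum_distrib_left mult.assoc)
  finally show "mmul N r (mmul N r f g) h u w = mmul N r f (mmul N r g h) u w" .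
qed

lemma mmul_id_mat_left:
  assumes "is_end N r f"
  shows "mmul N r (id_mat N r) f = f"
proof (intro ext)
  fix u w
  have "mmul N r (id_mat N r) f u w = (\<Sum>v\<in>words N r. if v = u then f v w else 0)"
    unfolding mmul_def id_mat_def by (intro sum.cong) auto
  then show "mmul N r (id_mat N r) f u w = f u w"
    using assms unfolding is_end_def by (simp add: sum.delta[OF finite_words])
qed

lemma mmul_id_mat_right:
  assumes "is_end N r f"
  shows "mmul N r f (id_mat N r) = f"
proof (intro ext)
  fix u w
  have "mmul N r f (id_mat N r) u w = (\<Sum>v\<in>words N r. if v = w then f u v else 0)"
    unfolding mmul_def id_mat_def by (intro sum.cong) auto
  then show "mmul N r f (id_mat N r) u w = f u w"
    using assms unfolding is_end_def by (simp add: sum.delta[OF finite_words])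
qed

lemma mmul_zero_left: "mmul N r (\<lambda>u w. 0) A = (\<lambda>u w. 0)"
  unfolding mmul_def by simp

lemma mmul_zero_right: "mmul N r A (\<lambda>u w. 0) = (\<lambda>u w. 0)"
  unfolding mmul_def by simp

lemma mmul_add_left:
  "mmul N r (\<lambda>u w. f u w + g u w) A = (\<lambda>u w. mmul N r f A u w + mmul N r g A u w)"
  unfolding mmul_def by (intro ext) (simp add: sum.distrib algebra_simps)

lemma mmul_add_right:
  "mmul N r A (\<lambda>u w. f u w + g u w) = (\<lambda>u w. mmul N r A f u w + mmul N r A g u w)"
  unfolding mmul_def by (intro ext) (simp add: sum.distrib algebra_simps)

lemma mmul_neg_left: "mmul N r (\<lambda>u w. - f u w) A = (\<lambda>u w. - mmul N r f A u w)"
  unfolding mmul_def by (intro ext) (simp add: sum_negf)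

lemma mmul_neg_right: "mmul N r A (\<lambda>u w. - f u w) = (\<lambda>u w. - mmul N r A f u w)"
  unfolding mmul_def by (intro ext) (simp add: sum_negf)

lemma mmul_lincomb_left:
  "mmul N r (\<lambda>u w. a * f u w + b * g u w) A = (\<lambda>u w. a * mmul N r f A u w + b * mmul N r g A u w)"
  unfolding mmul_def by (intro ext) (simp add: sum.distrib sum_distrib_left algebra_simps)

lemma mmul_lincomb_right:
  "mmul N r A (\<lambda>u w. a * f u w + b * g u w) = (\<lambda>u w. a * mmul N r A f u w + b * mmul N r A g u w)"
  unfolding mmul_def by (intro ext) (simp add: sum.distrib sum_distrib_left algebra_simps)

definition swap_adj :: "nat \<Rightarrow> nat list \<Rightarrow> nat list" where
  "swap_adj i w = w[i - 1 := w ! i, i := w ! (i - 1)]"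

lemma length_swap_adj [simp]: "length (swap_adj i w) = length w"
  by (simp add: swap_adj_def)

lemma nth_swap_adj:
  "1 \<le> i \<Longrightarrow> i < length w \<Longrightarrow> j < length w \<Longrightarrow>
    swap_adj i w ! j = (if j = i then w ! (i - 1) else if j = i - 1 then w ! i else w ! j)"
  by (auto simp: swap_adj_def nth_list_update)

lemma swap_adj_in_words: "1 \<le> i \<Longrightarrow> i < r \<Longrightarrow> w \<in> words N r \<Longrightarrow> swap_adj i w \<in> words N r"
  unfolding words_def swap_adj_def
  by (auto dest!: set_update_subset_insert[THEN subsetD])

lemma swap_adj_swap_adj: "1 \<le> i \<Longrightarrow> i < length w \<Longrightarrow> swap_adj i (swap_adj i w) = w"
  by (rule nth_equalityI) (auto simp: nth_swap_adj)

lemma swap_adj_id: "1 \<le> i \<Longrightarrow> i < length w \<Longrightarrow> w ! (i - 1) = w ! i \<Longrightarrow> swap_adj i w = w"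
  by (rule nth_equalityI) (auto simp: nth_swap_adj)

lemma piT_nonzero_cases:
  assumes "piT m n r i u v \<noteq> 0" and "1 \<le> i" and "i < r"
  shows "u = v \<or> u = swap_adj i v"
proof -
  have uv: "length u = r" "length v = r"
    and agree: "\<forall>j<r. j \<noteq> i - 1 \<and> j \<noteq> i \<longrightarrow> u ! j = v ! j"
    and "Tcoef m (u ! (i - 1)) (u ! i) (v ! (i - 1)) (v ! i) \<noteq> 0"
    using assms(1) unfolding piT_def words_def by (auto split: if_splits)
  then have "u ! (i - 1) = v ! (i - 1) \<and> u ! i = v ! i \<or> u ! (i - 1) = v ! i \<and> u ! i = v ! (i - 1)"
    using Tcoef_eq_0 by blast
  then show ?thesis
  proof
    assume "u ! (i - 1) = v ! (i - 1) \<and> u ! i = v ! i"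
    then have "u = v"
      by (intro nth_equalityI) (use uv agree in auto)
    then show ?thesis ..
  next
    assume "u ! (i - 1) = v ! i \<and> u ! i = v ! (i - 1)"
    then have "u = swap_adj i v"
      by (intro nth_equalityI) (use uv agree assms(2,3) in \<open>auto simp: nth_swap_adj\<close>)
    then show ?thesis ..
  qed
qed

lemma piT_swap_adj_entries:
  assumes w: "w \<in> words (m + n) r" and i: "1 \<le> i" "i < r"
  defines "s \<equiv> swap_adj i w" and "k \<equiv> w ! (i - 1)" and "l \<equiv> w ! i"
  shows "piT m n r i w w = Tcoef m k l k l" and "piT m n r i w s = Tcoef m k l l k"
    and "piT m n r i s w = Tcoef m l k k l" and "piT m n r i s s = Tcoef m l k l k"
proof -
  have s: "s \<in> words (m + n) r"
    unfolding s_def using swap_adj_in_words[OF i w] .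
  have "length w = r"
    using w by (simp add: words_def)
  then have "s ! (i - 1) = l" "s ! i = k" "\<forall>j<r. j \<noteq> i - 1 \<and> j \<noteq> i \<longrightarrow> s ! j = w ! j"
    unfolding s_def k_def l_def using i by (auto simp: nth_swap_adj)
  then show "piT m n r i w w = Tcoef m k l k l" "piT m n r i w s = Tcoef m k l l k"
    "piT m n r i s w = Tcoef m l k k l" "piT m n r i s s = Tcoef m l k l k"
    using w s unfolding piT_def k_def l_def by auto
qed

lemma mmul_piT_piT_two_terms:
  assumes "w \<in> words (m + n) r" and i: "1 \<le> i" "i < r"
  shows "mmul (m + n) r (piT m n r i) (piT m n r i) u w =
    (\<Sum>v\<in>{w, swap_adj i w}. piT m n r i u v * piT m n r i v w)"
  unfolding mmul_def
  using assms swap_adj_in_words[OF i assms(1)]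
  by (intro sum.mono_neutral_right[OF finite_words]) (auto dest: piT_nonzero_cases[OF _ i])

lemma piT_involution:
  assumes i: "1 \<le> i" "i < r"
  shows "mmul (m + n) r (piT m n r i) (piT m n r i) = id_mat (m + n) r"
proof (intro ext)
  fix u w
  let ?P = "piT m n r i"
  show "mmul (m + n) r ?P ?P u w = id_mat (m + n) r u w"
  proof (cases "w \<in> words (m + n) r")
    case False
    then show ?thesis
      unfolding mmul_def id_mat_def piT_def by auto
  next
    case w: True
    define s k l where "s = swap_adj i w" and "k = w ! (i - 1)" and "l = w ! i"
    have len: "length w = r"
      using w by (simp add: words_def)
    note entries = piT_swap_adj_entries[OF w i, folded s_def k_def l_def]
    have sum: "mmul (m + n) r ?P ?P u w = (\<Sum>v\<in>{w, s}. ?P u v * ?P v w)"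
      unfolding s_def by (rule mmul_piT_piT_two_terms[OF w i])
    have outside: "?P u w = 0" "?P u s = 0" if "u \<noteq> w" "u \<noteq> s"
      using that piT_nonzero_cases[OF _ i, of m n u w] piT_nonzero_cases[OF _ i, of m n u s]
        swap_adj_swap_adj[OF i(1), of w] i(2) len unfolding s_def by auto
    show ?thesis
    proof (cases "k = l")
      case True
      then have "s = w"
        unfolding s_def k_def l_def using swap_adj_id i len by simp
      then show ?thesis
        using sum entries(1) outside True Tcoef_diag_square w by (auto simp: id_mat_def)
    next
      case False
      moreover have "s ! (i - 1) = l"
        unfolding s_def l_def using i len by (simp add: nth_swap_adj)
      ultimately have "s \<noteq> w"
        unfolding k_def by auto
      then have sum2: "mmul (m + n) r ?P ?P u w = ?P u w * ?P w w + ?P u s * ?P s w"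
        using sum by simp
      consider "u = w" | "u = s" | "u \<noteq> w" "u \<noteq> s" by blast
      then show ?thesis
      proof cases
        case 1
        then show ?thesis
          using sum2 entries Tcoef_offdiag_square[OF False] w by (simp add: id_mat_def)
      next
        case 2
        then show ?thesis
          using sum2 entries Tcoef_offdiag_cancel[OF False] \<open>s \<noteq> w\<close> by (simp add: id_mat_def)
      next
        case 3
        then show ?thesis
          using sum2 outside by (simp add: id_mat_def)
      qed
    qed
  qed
qed

lemma involution_conj_intertwines:
  assumes P: "mmul N r P P = id_mat N r" and "is_end N r Q" and "is_end N r f"
    and comm: "mmul N r (mmul N r P Q) f = mmul N r f (mmul N r P Q)"
  shows "mmul N r Q f = mmul N r (mmul N r P (mmul N r f P)) Q"
proof -
  let ?M = "mmul N r"
  have "?M Q f = ?M (?M P P) (?M Q f)"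
    using P mmul_id_mat_left is_end_mmul assms(2,3) by metis
  also have "\<dots> = ?M P (?M (?M P Q) f)"
    by (simp add: mmul_assoc)
  also have "\<dots> = ?M P (?M f (?M P Q))"
    using comm by simp
  also have "\<dots> = ?M (?M P (?M f P)) Q"
    by (simp add: mmul_assoc)
  finally show ?thesis .
qed

lemma involution_intertwines_sym:
  assumes Q: "mmul N r Q Q = id_mat N r" and "is_end N r Q" and "is_end N r f" and "is_end N r g"
    and fg: "mmul N r Q f = mmul N r g Q"
  shows "mmul N r Q g = mmul N r f Q"
proof -
  let ?M = "mmul N r"
  have "?M Q g = ?M Q (?M g (?M Q Q))"
    using Q mmul_id_mat_right assms(4) by metis
  also have "\<dots> = ?M (?M Q (?M Q f)) Q"
    using fg by (simp add: mmul_assoc)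
  also have "\<dots> = ?M (?M Q Q) (?M f Q)"
    by (simp add: mmul_assoc)
  also have "\<dots> = ?M f Q"
    using Q mmul_id_mat_left is_end_mmul assms(2,3) by metis
  finally show ?thesis .
qed

lemma intertwined_pair_split:
  assumes fg: "mmul N r A f = mmul N r g A" and gf: "mmul N r A g = mmul N r f A"
  shows "mmul N r A (\<lambda>u w. (f u w + g u w) / 2) = mmul N r (\<lambda>u w. (f u w + g u w) / 2) A"
    and "mmul N r A (\<lambda>u w. (f u w - g u w) / 2) = (\<lambda>u w. - mmul N r (\<lambda>u w. (f u w - g u w) / 2) A u w)"
proof -
  have plus: "(\<lambda>u w. (f u w + g u w) / 2) = (\<lambda>u w. 1/2 * f u w + 1/2 * g u w)"
    and minus: "(\<lambda>u w. (f u w - g u w) / 2) = (\<lambda>u w. 1/2 * f u w + (- 1/2) * g u w)"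
    by (simp_all add: field_simps)
  show "mmul N r A (\<lambda>u w. (f u w + g u w) / 2) = mmul N r (\<lambda>u w. (f u w + g u w) / 2) A"
    unfolding plus mmul_lincomb_left mmul_lincomb_right using fg gf by (simp add: algebra_simps)
  show "mmul N r A (\<lambda>u w. (f u w - g u w) / 2) = (\<lambda>u w. - mmul N r (\<lambda>u w. (f u w - g u w) / 2) A u w)"
    unfolding minus mmul_lincomb_left mmul_lincomb_right using fg gf by (simp add: algebra_simps)
qed

lemma mmul_commutes_product:
  assumes "mmul N r A f = mmul N r f A" and "mmul N r B f = mmul N r f B"
  shows "mmul N r (mmul N r A B) f = mmul N r f (mmul N r A B)"
  using assms by (metis mmul_assoc)

lemma mmul_anticommutes_product:
  assumes "mmul N r A f = (\<lambda>u w. - mmul N r f A u w)" and "mmul N r B f = (\<lambda>u w. - mmul N r f B u w)"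
  shows "mmul N r (mmul N r A B) f = mmul N r f (mmul N r A B)"
proof -
  have "mmul N r (mmul N r A B) f = (\<lambda>u w. - mmul N r (mmul N r A f) B u w)"
    using assms(2) by (simp add: mmul_assoc mmul_neg_right)
  also have "\<dots> = mmul N r f (mmul N r A B)"
    using assms(1) by (simp add: mmul_neg_left mmul_assoc)
  finally show ?thesis .
qed

lemma Dq_intertwines_conj:
  assumes f: "f \<in> Dq m n r" and i: "i \<in> {1..r - 1}"
  defines "g \<equiv> mmul (m + n) r (piT m n r 1) (mmul (m + n) r f (piT m n r 1))"
  shows "mmul (m + n) r (piT m n r i) f = mmul (m + n) r g (piT m n r i)"
    and "mmul (m + n) r (piT m n r i) g = mmul (m + n) r f (piT m n r i)"
proof -
  let ?M = "mmul (m + n) r" and ?T = "piT m n r"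
  have ef: "is_end (m + n) r f"
    using f by (simp add: Dq_def)
  have P: "?M (?T 1) (?T 1) = id_mat (m + n) r" and Q: "?M (?T i) (?T i) = id_mat (m + n) r"
    using i piT_involution by auto
  have "?M (?M (?T 1) (?T i)) f = ?M f (?M (?T 1) (?T i))"
  proof (cases "i = 1")
    case True
    then show ?thesis
      using P ef by (simp add: mmul_id_mat_left mmul_id_mat_right)
  next
    case False
    then have "i - 1 \<in> {1..r - 2}"
      using i by auto
    then have "?M (?M (?T 1) (?T (i - 1 + 1))) f = ?M f (?M (?T 1) (?T (i - 1 + 1)))"
      using f unfolding Dq_def Let_def by blast
    moreover have "i - 1 + 1 = i"
      using i by auto
    ultimately show ?thesis
      by simp
  qed
  then show fg: "?M (?T i) f = ?M g (?T i)"
    unfolding g_def using involution_conj_intertwines[OF P is_end_piT ef] by blast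
  have "is_end (m + n) r g"
    unfolding g_def using ef is_end_piT by (intro is_end_mmul)
  then show "?M (?T i) g = ?M f (?T i)"
    using involution_intertwines_sym[OF Q is_end_piT ef _ fg] by blast
qed

lemma Dq_subset_sums:
  "Dq m n r \<subseteq> {(\<lambda>u w. f u w + g u w) | f g. f \<in> Bq m n r \<and> g \<in> Bq_dag m n r}"
proof
  fix f assume f: "f \<in> Dq m n r"
  define g where "g = mmul (m + n) r (piT m n r 1) (mmul (m + n) r f (piT m n r 1))"
  have "is_end (m + n) r f"
    using f by (simp add: Dq_def)
  moreover have "is_end (m + n) r g"
    unfolding g_def using calculation is_end_piT by (intro is_end_mmul)
  ultimately have "is_end (m + n) r (\<lambda>u w. (f u w + g u w) / 2)"
    and "is_end (m + n) r (\<lambda>u w. (f u w - g u w) / 2)"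
    unfolding is_end_def by auto
  then have "(\<lambda>u w. (f u w + g u w) / 2) \<in> Bq m n r"
    and "(\<lambda>u w. (f u w - g u w) / 2) \<in> Bq_dag m n r"
    using intertwined_pair_split[OF Dq_intertwines_conj[OF f, folded g_def]]
    unfolding Bq_def Bq_dag_def by auto
  moreover have "f = (\<lambda>u w. (f u w + g u w) / 2 + (f u w - g u w) / 2)"
    by (simp add: field_simps)
  ultimately show "f \<in> {(\<lambda>u w. f u w + g u w) | f g. f \<in> Bq m n r \<and> g \<in> Bq_dag m n r}"
    by (intro CollectI exI[of _ "\<lambda>u w. (f u w + g u w) / 2"] exI[of _ "\<lambda>u w. (f u w - g u w) / 2"]) simp
qed

lemma sum_in_Dq:
  assumes f: "f \<in> Bq m n r" and g: "g \<in> Bq_dag m n r"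
  shows "(\<lambda>u w. f u w + g u w) \<in> Dq m n r"
proof -
  let ?M = "mmul (m + n) r" and ?T = "piT m n r"
  have "?M (?M (?T 1) (?T (j + 1))) f = ?M f (?M (?T 1) (?T (j + 1)))"
    and "?M (?M (?T 1) (?T (j + 1))) g = ?M g (?M (?T 1) (?T (j + 1)))"
    if "j \<in> {1..r - 2}" for j
  proof -
    have "1 \<in> {1..r - 1}" and "j + 1 \<in> {1..r - 1}"
      using that by auto
    then show "?M (?M (?T 1) (?T (j + 1))) f = ?M f (?M (?T 1) (?T (j + 1)))"
      and "?M (?M (?T 1) (?T (j + 1))) g = ?M g (?M (?T 1) (?T (j + 1)))"
      using f g unfolding Bq_def Bq_dag_def
      by (blast intro: mmul_commutes_product mmul_anticommutes_product)+
  qed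
  moreover have "is_end (m + n) r (\<lambda>u w. f u w + g u w)"
    using f g unfolding Bq_def Bq_dag_def is_end_def by auto
  ultimately show ?thesis
    unfolding Dq_def Let_def by (simp add: mmul_add_left mmul_add_right)
qed

lemma Bq_inter_Bq_dag:
  assumes "r \<ge> 2"
  shows "Bq m n r \<inter> Bq_dag m n r = {(\<lambda>u w. 0)}"
proof (intro equalityI subsetI)
  fix f assume f: "f \<in> Bq m n r \<inter> Bq_dag m n r"
  let ?M = "mmul (m + n) r" and ?P = "piT m n r 1"
  have "1 \<in> {1..r - 1}"
    using assms by simp
  then have "?M f ?P = (\<lambda>u w. - ?M f ?P u w)"
    using f unfolding Bq_def Bq_dag_def by auto
  then have zero: "?M f ?P = (\<lambda>u w. 0)"
    by (intro ext) (metis add_eq_0_iff2 neg_equal_zero)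
  have "f = ?M f (?M ?P ?P)"
    using f piT_involution[of 1 r] assms mmul_id_mat_right unfolding Bq_def by auto
  also have "\<dots> = (\<lambda>u w. 0)"
    using zero by (simp add: mmul_assoc[symmetric] mmul_zero_left)
  finally show "f \<in> {(\<lambda>u w. 0)}" by simp
next
  show "f \<in> Bq m n r \<inter> Bq_dag m n r" if "f \<in> {(\<lambda>u w. 0)}" for f
    using that by (simp add: Bq_def Bq_dag_def is_end_def mmul_zero_left mmul_zero_right)
qed

theorem lemma5p1:
  fixes m n r :: nat
  assumes "r \<ge> 2" and "m + n \<ge> 1"
  shows "Dq m n r = {(\<lambda>u w. f u w + g u w) | f g. f \<in> Bq m n r \<and> g \<in> Bq_dag m n r}
    \<and> Bq m n r \<inter> Bq_dag m n r = {(\<lambda>u w. 0)}"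
  using Dq_subset_sums sum_in_Dq Bq_inter_Bq_dag[OF assms(1)] by blast

end
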